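(* Let $G$ be a connected graph with $n\geq 2$ vertices and $m$ edges, and let $T(G)$ be its triangulation. Then $$R^+(T(G))=2R^+(G)+2R^*(G)+\frac{12m^2-mn-n^2-2m+n}{3}.$$
   Context: All graphs are finite, undirected, without loops or multiple edges. For a connected graph $H$ and vertices $i,j$, the resistance distance $\Omega_{ij}$ is the effective resistance between $i$ and $j$ in the electrical network obtained from $H$ by replacing each edge by a unit resistor. With $d_i$ the degree of vertex $i$ in $H$ and sums over unordered pairs of distinct vertices of $H$: $R^+(H)=\sum_{\{i,j\}\subseteq V(H)}(d_i+d_j)\Omega_{ij}$ (additive degree-Kirchhoff index) and $R^*(H)=\sum_{\{i,j\}\subseteq V(H)}d_id_j\Omega_{ij}$ (multiplicative degree-Kirchhoff index), with degrees and resistances taken in $H$. The triangulation $T(G)$ is obtained from $G$ by adding, for each edge $uv$, a new vertex $w$ adjacent to both $u$ and $v$ (keeping the edge $uv$). *)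

theory Defs
  imports Complex_Main
begin

definition simple_graph :: "'a set \<Rightarrow> 'a set set \<Rightarrow> bool" where
  "simple_graph V E \<longleftrightarrow> finite V \<and> (\<forall>e\<in>E. card e = 2 \<and> e \<subseteq> V)"

definition graph_connected :: "'a set \<Rightarrow> 'a set set \<Rightarrow> bool" where
  "graph_connected V E \<longleftrightarrow>
     (\<forall>u\<in>V. \<forall>v\<in>V. (\<lambda>x y. {x, y} \<in> E)\<^sup>*\<^sup>* u v)"

definition degree :: "'a set set \<Rightarrow> 'a \<Rightarrow> nat" where
  "degree E v = card {e \<in> E. v \<in> e}"

text \<open>Effective resistance: inject a unit current at i and extract it at j
  (Kirchhoff's current law with unit resistors, i.e. L x = e_i - e_j);
  the resistance is the resulting potential difference x i - x j.\<close>
definition resistance :: "'a set \<Rightarrow> 'a set set \<Rightarrow> 'a \<Rightarrow> 'a \<Rightarrow> real" where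
  "resistance V E i j = (THE r. \<exists>x :: 'a \<Rightarrow> real.
      (\<forall>v\<in>V. (\<Sum>u\<in>{u\<in>V. {u, v} \<in> E}. x v - x u)
              = (if v = i then 1 else 0) - (if v = j then 1 else 0))
      \<and> r = x i - x j)"

text \<open>Sums over unordered pairs of distinct vertices, written as half the
  sum over ordered pairs of distinct vertices.\<close>
definition Rplus :: "'a set \<Rightarrow> 'a set set \<Rightarrow> real" where
  "Rplus V E = (\<Sum>i\<in>V. \<Sum>j\<in>V - {i}.
      (real (degree E i) + real (degree E j)) * resistance V E i j) / 2"

definition Rstar :: "'a set \<Rightarrow> 'a set set \<Rightarrow> real" where
  "Rstar V E = (\<Sum>i\<in>V. \<Sum>j\<in>V - {i}.
      (real (degree E i) * real (degree E j)) * resistance V E i j) / 2"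

text \<open>Triangulation: old vertices Inl v, one new vertex Inr e per edge e.\<close>
definition tri_V :: "'a set \<Rightarrow> 'a set set \<Rightarrow> ('a + 'a set) set" where
  "tri_V V E = Inl ` V \<union> Inr ` E"

definition tri_E :: "'a set \<Rightarrow> 'a set set \<Rightarrow> ('a + 'a set) set set" where
  "tri_E V E = (\<lambda>e. Inl ` e) ` E \<union> {{Inl u, Inr e} | u e. e \<in> E \<and> u \<in> e}"

end

theory Submission
  imports Defs "Jordan_Normal_Form.Determinant"
begin

text \<open>Effective resistances of \<open>G\<close> are expressed through grounded potentials \<open>green p\<close>,
  the solutions of \<open>L x = e\<^sub>p - e\<^sub>r\<close> for a fixed root \<open>r\<close>. The key observation is a lifting
  of potentials to \<open>T(G)\<close>: if \<open>L\<^sub>G x\<close> equals \<open>\<alpha> v\<close> plus half the sum of \<open>\<sigma> e\<close> over the edges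
  \<open>e\<close> at \<open>v\<close>, then the potential equal to \<open>2/3 x v\<close> at old vertices and to
  \<open>(x a + x b)/3 + \<sigma> e / 2\<close> at the vertex of \<open>e = {a, b}\<close> has Laplacian \<open>\<alpha>\<close> on the old and
  \<open>\<sigma>\<close> on the new vertices of \<open>T(G)\<close>. Choosing \<open>\<alpha>\<close> and \<open>\<sigma>\<close> as unit currents expresses every
  resistance of \<open>T(G)\<close> through those of \<open>G\<close>. Summing them against the degrees of \<open>T(G)\<close>
  (twice the old degree at old vertices, \<open>2\<close> at new ones) and using Foster's theorem
  (the resistances across the edges of \<open>G\<close> sum to \<open>n - 1\<close>) yields the formula.\<close>

lemma mat_vec_solvable_if_injective:
  fixes M :: "real mat"
  assumes M: "M \<in> carrier_mat n n"
    and inj: "\<And>w. w \<in> carrier_vec n \<Longrightarrow> M *\<^sub>v w = 0\<^sub>v n \<Longrightarrow> w = 0\<^sub>v n"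
    and c: "c \<in> carrier_vec n"
  shows "\<exists>y\<in>carrier_vec n. M *\<^sub>v y = c"
proof -
  have "det M \<noteq> 0" using det_0_iff_vec_prod_zero_field[OF M] inj by blast
  from det_non_zero_imp_unit[OF M this, of "()"]
  obtain B where B: "B \<in> carrier_mat n n" "M * B = 1\<^sub>m n"
    unfolding Units_def by (auto simp: ring_mat_def)
  then have "M *\<^sub>v (B *\<^sub>v c) = c" using M c by (metis assoc_mult_mat_vec one_mult_mat_vec)
  then show ?thesis using B c by (meson mult_mat_vec_carrier)
qed

lemma injective_imp_solvable_linear_system:
  fixes A :: "'a \<Rightarrow> 'a \<Rightarrow> real"
  assumes fin: "finite V"
    and inj: "\<And>x. \<forall>v\<in>V. (\<Sum>u\<in>V. A v u * x u) = 0 \<Longrightarrow> \<forall>u\<in>V. x u = 0"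
  shows "\<exists>x. \<forall>v\<in>V. (\<Sum>u\<in>V. A v u * x u) = b v"
proof -
  define n where "n = card V"
  obtain f where f: "bij_betw f {0..<n} V"
    using ex_bij_betw_nat_finite[OF fin] n_def by blast
  define g where "g = inv_into {0..<n} f"
  have fg: "\<And>u. u \<in> V \<Longrightarrow> f (g u) = u" "\<And>u. u \<in> V \<Longrightarrow> g u < n"
    using f unfolding g_def
    by (auto simp: bij_betw_inv_into_right bij_betw_def inv_into_into)
  have gf: "\<And>i. i < n \<Longrightarrow> g (f i) = i"
    using f unfolding g_def by (simp add: bij_betw_inv_into_left)
  define M where "M = mat n n (\<lambda>(i,j). A (f i) (f j))"
  have M: "M \<in> carrier_mat n n" by (simp add: M_def)
  have M_mult: "(M *\<^sub>v w) $ g v = (\<Sum>u\<in>V. A v u * w $ g u)" if "v \<in> V" "w \<in> carrier_vec n" for v w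
  proof -
    have "(\<Sum>u\<in>V. A v u * w $ g u) = (\<Sum>j\<in>{0..<n}. A v (f j) * w $ j)"
      using f gf by (simp add: sum.reindex_bij_betw[OF f, symmetric])
    then show ?thesis using that fg by (simp add: M_def scalar_prod_def)
  qed
  have M_inj: "w = 0\<^sub>v n" if w: "w \<in> carrier_vec n" "M *\<^sub>v w = 0\<^sub>v n" for w
  proof -
    have "\<forall>v\<in>V. (\<Sum>u\<in>V. A v u * w $ g u) = 0"
      using w M_mult fg(2) by (metis carrier_vecD index_zero_vec(1))
    with inj have "\<forall>u\<in>V. w $ g u = 0" .
    then have "w $ i = 0" if "i < n" for i
      using that gf f by (metis atLeastLessThan_iff bij_betwE zero_le)
    then show "w = 0\<^sub>v n" using w(1) by (intro eq_vecI) auto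
  qed
  from mat_vec_solvable_if_injective[OF M M_inj vec_carrier]
  obtain y where y: "y \<in> carrier_vec n" "M *\<^sub>v y = vec n (\<lambda>i. b (f i))"
    by blast
  then have "\<forall>v\<in>V. (\<Sum>u\<in>V. A v u * y $ g u) = b v"
    using M_mult[OF _ y(1), symmetric] y(2) fg by simp
  then show ?thesis by (intro exI[of _ "\<lambda>u. y $ g u"]) simp
qed

lemma simple_graph_finite: "simple_graph V E \<Longrightarrow> finite V"
  by (simp add: simple_graph_def)

lemma simple_graph_edge: "simple_graph V E \<Longrightarrow> e \<in> E \<Longrightarrow> card e = 2 \<and> e \<subseteq> V"
  by (simp add: simple_graph_def)

lemma simple_graph_finite_edges: "simple_graph V E \<Longrightarrow> finite E"
  by (meson Pow_iff finite_Pow_iff rev_finite_subset simple_graph_edge simple_graph_finite subsetI)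

lemma simple_graph_doubleton_edge:
  "simple_graph V E \<Longrightarrow> {u, v} \<in> E \<Longrightarrow> u \<noteq> v \<and> u \<in> V \<and> v \<in> V"
  using simple_graph_edge[of V E "{u,v}"] by (cases "u = v") auto

lemma simple_graph_edgeE:
  assumes "simple_graph V E" and "e \<in> E"
  obtains a b where "e = {a, b}" "a \<noteq> b" "a \<in> V" "b \<in> V"
proof -
  have "card e = 2" "e \<subseteq> V" using simple_graph_edge[OF assms] by auto
  then show ?thesis using that by (metis card_2_iff insert_subset)
qed

definition neighbours :: "'a set \<Rightarrow> 'a set set \<Rightarrow> 'a \<Rightarrow> 'a set" where
  "neighbours V E v = {u\<in>V. {u, v} \<in> E}"

definition laplacian :: "'a set \<Rightarrow> 'a set set \<Rightarrow> ('a \<Rightarrow> real) \<Rightarrow> 'a \<Rightarrow> real" where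
  "laplacian V E x v = (\<Sum>u\<in>neighbours V E v. x v - x u)"

lemma finite_neighbours: "simple_graph V E \<Longrightarrow> finite (neighbours V E v)"
  by (simp add: neighbours_def simple_graph_finite)

lemma incident_edges_eq_image_neighbours:
  assumes "simple_graph V E"
  shows "{e\<in>E. v \<in> e} = (\<lambda>u. {u, v}) ` neighbours V E v"
proof
  show "{e\<in>E. v \<in> e} \<subseteq> (\<lambda>u. {u, v}) ` neighbours V E v"
  proof
    fix e assume e: "e \<in> {e\<in>E. v \<in> e}"
    then obtain a b where ab: "e = {a, b}" "a \<in> V" "b \<in> V"
      using simple_graph_edgeE[OF assms] by blast
    define u where "u = (if v = a then b else a)"
    have "e = {u, v}" "u \<in> V" using ab e unfolding u_def by auto
    then show "e \<in> (\<lambda>u. {u, v}) ` neighbours V E v" using e by (auto simp: neighbours_def)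
  qed
qed (auto simp: neighbours_def)

lemma degree_eq_card_neighbours:
  assumes "simple_graph V E"
  shows "Defs.degree E v = card (neighbours V E v)"
proof -
  have "inj_on (\<lambda>u. {u, v}) (neighbours V E v)"
    by (auto simp: inj_on_def doubleton_eq_iff)
  then show ?thesis
    by (simp add: Defs.degree_def incident_edges_eq_image_neighbours[OF assms] card_image)
qed

lemma sum_incident_edges:
  assumes "simple_graph V E"
  shows "(\<Sum>e\<in>{e\<in>E. v \<in> e}. \<Sum>p\<in>e. f p) = real (Defs.degree E v) * f v + (\<Sum>u\<in>neighbours V E v. f u)"
proof -
  have "inj_on (\<lambda>u. {u, v}) (neighbours V E v)"
    by (auto simp: inj_on_def doubleton_eq_iff)
  then have "(\<Sum>e\<in>{e\<in>E. v \<in> e}. \<Sum>p\<in>e. f p) = (\<Sum>u\<in>neighbours V E v. \<Sum>p\<in>{u,v}. f p)"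
    by (simp add: incident_edges_eq_image_neighbours[OF assms] sum.reindex)
  also have "\<dots> = (\<Sum>u\<in>neighbours V E v. f u + f v)"
    by (rule sum.cong) (auto simp: neighbours_def dest: simple_graph_doubleton_edge[OF assms])
  finally show ?thesis
    by (simp add: sum.distrib degree_eq_card_neighbours[OF assms])
qed

lemma sum_edges_endpoints_swap:
  assumes "simple_graph V E"
  shows "(\<Sum>e\<in>E. \<Sum>p\<in>e. H e p) = (\<Sum>p\<in>V. \<Sum>e\<in>{e\<in>E. p \<in> e}. H e p)"
proof -
  have fin: "finite V" "finite E"
    using assms simple_graph_finite simple_graph_finite_edges by blast+
  have "(\<Sum>e\<in>E. \<Sum>p\<in>e. H e p) = (\<Sum>e\<in>E. \<Sum>p\<in>V. if p \<in> e then H e p else 0)"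
  proof (rule sum.cong[OF refl])
    fix e assume "e \<in> E"
    then have "e \<subseteq> V" using simple_graph_edge[OF assms] by blast
    then show "(\<Sum>p\<in>e. H e p) = (\<Sum>p\<in>V. if p \<in> e then H e p else 0)"
      using fin by (simp add: sum.inter_filter Int_absorb1 sum.If_cases)
  qed
  also have "\<dots> = (\<Sum>p\<in>V. \<Sum>e\<in>E. if p \<in> e then H e p else 0)" by (rule sum.swap)
  finally show ?thesis using fin by (simp add: sum.inter_filter)
qed

lemma sum_edges_endpoints:
  assumes "simple_graph V E"
  shows "(\<Sum>e\<in>E. \<Sum>p\<in>e. f p) = (\<Sum>p\<in>V. real (Defs.degree E p) * f p)"
  by (simp add: sum_edges_endpoints_swap[OF assms] Defs.degree_def)

lemma sum_degree:
  assumes "simple_graph V E"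
  shows "(\<Sum>v\<in>V. real (Defs.degree E v)) = 2 * real (card E)"
proof -
  have "(\<Sum>v\<in>V. real (Defs.degree E v)) = (\<Sum>e\<in>E. \<Sum>p\<in>e. 1)"
    using sum_edges_endpoints[OF assms, of "\<lambda>_. 1"] by simp
  also have "\<dots> = (\<Sum>e\<in>E. 2)" by (rule sum.cong) (simp_all add: simple_graph_edge[OF assms])
  finally show ?thesis by simp
qed

lemma sum_neighbours_swap:
  assumes "simple_graph V E"
  shows "(\<Sum>p\<in>V. \<Sum>u\<in>neighbours V E p. F p u) = (\<Sum>p\<in>V. \<Sum>u\<in>neighbours V E p. F u p)"
proof -
  have fin: "finite V" using assms simple_graph_finite by blast
  have as_sum: "(\<Sum>u\<in>neighbours V E p. G p u) = (\<Sum>u\<in>V. if {u,p} \<in> E then G p u else 0)" for G p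
    unfolding neighbours_def using fin by (simp add: sum.inter_filter)
  have "(\<Sum>p\<in>V. \<Sum>u\<in>V. if {u,p} \<in> E then F p u else 0)
      = (\<Sum>u\<in>V. \<Sum>p\<in>V. if {p,u} \<in> E then F p u else 0)"
    by (subst sum.swap) (simp add: insert_commute)
  then show ?thesis using as_sum[of F] as_sum[of "\<lambda>p u. F u p"] by simp
qed

lemma sum_laplacian_eq_0:
  assumes "simple_graph V E"
  shows "(\<Sum>v\<in>V. laplacian V E x v) = 0"
proof -
  have "(\<Sum>p\<in>V. \<Sum>u\<in>neighbours V E p. x p - x u) = (\<Sum>p\<in>V. \<Sum>u\<in>neighbours V E p. x u - x p)"
    by (rule sum_neighbours_swap[OF assms])
  also have "\<dots> = - (\<Sum>p\<in>V. \<Sum>u\<in>neighbours V E p. x p - x u)"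
    by (simp add: sum_negf[symmetric])
  finally show ?thesis by (simp add: laplacian_def)
qed

lemma laplacian_const: "laplacian V E (\<lambda>_. c) v = 0"
  by (simp add: laplacian_def)

lemma laplacian_uminus: "laplacian V E (\<lambda>t. - x t) v = - laplacian V E x v"
  unfolding laplacian_def by (simp add: sum_negf[symmetric])

lemma laplacian_add: "laplacian V E (\<lambda>t. x t + y t) v = laplacian V E x v + laplacian V E y v"
  unfolding laplacian_def by (simp add: sum.distrib[symmetric] algebra_simps)

lemma laplacian_diff: "laplacian V E (\<lambda>t. x t - y t) v = laplacian V E x v - laplacian V E y v"
  unfolding laplacian_def by (simp add: sum_subtractf[symmetric] algebra_simps)

lemma laplacian_divide: "laplacian V E (\<lambda>t. x t / c) v = laplacian V E x v / c"
  unfolding laplacian_def by (simp add: sum_divide_distrib diff_divide_distrib)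

lemma laplacian_eq_matrix_sum:
  assumes "simple_graph V E" and "v \<in> V"
  shows "laplacian V E x v = (\<Sum>u\<in>V. ((if u = v then real (card (neighbours V E v)) else 0)
                                       - (if u \<in> neighbours V E v then 1 else 0)) * x u)"
proof -
  have N: "neighbours V E v \<subseteq> V" by (auto simp: neighbours_def)
  have fin: "finite V" using assms simple_graph_finite by blast
  have "(\<Sum>u\<in>V. ((if u = v then real (card (neighbours V E v)) else 0)
                   - (if u \<in> neighbours V E v then 1 else 0)) * x u)
      = (\<Sum>u\<in>V. if u = v then real (card (neighbours V E v)) * x u else 0)
        - (\<Sum>u\<in>V. if u \<in> neighbours V E v then x u else 0)"
    unfolding sum_subtractf[symmetric] by (rule sum.cong) (auto simp: algebra_simps)
  also have "\<dots> = real (card (neighbours V E v)) * x v - (\<Sum>u\<in>neighbours V E v. x u)"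
    using assms(2) fin N by (simp add: sum.inter_restrict[symmetric] Int_absorb1)
  finally show ?thesis by (simp add: laplacian_def sum_subtractf)
qed

text \<open>Maximum principle: at a vertex where a harmonic function is maximal, so is it at every neighbour.\<close>
lemma harmonic_imp_constant:
  assumes sg: "simple_graph V E" and con: "graph_connected V E"
    and harmonic: "\<forall>v\<in>V. laplacian V E x v = 0" and "i \<in> V" "j \<in> V"
  shows "x i = x j"
proof -
  have fin: "finite V" using sg simple_graph_finite by blast
  define M where "M = Max (x ` V)"
  obtain v0 where v0: "v0 \<in> V" "x v0 = M"
  proof -
    have "M \<in> x ` V" unfolding M_def using fin \<open>i \<in> V\<close> by (intro Max_in) auto
    then show ?thesis using that by blast
  qed
  have le: "x u \<le> M" if "u \<in> V" for u unfolding M_def using fin that by auto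
  have "u \<in> V \<and> x u = M" if "(\<lambda>x y. {x, y} \<in> E)\<^sup>*\<^sup>* v0 u" for u
    using that
  proof (induction rule: rtranclp_induct)
    case base then show ?case using v0 by simp
  next
    case (step y z)
    have nonneg: "0 \<le> x y - x u" if "u \<in> neighbours V E y" for u
      using that le[of u] step.IH by (simp add: neighbours_def)
    have "(\<Sum>u\<in>neighbours V E y. x y - x u) = 0"
      using harmonic step.IH unfolding laplacian_def by blast
    then have "\<forall>u\<in>neighbours V E y. x y - x u = 0"
      using sum_nonneg_eq_0_iff[where f="\<lambda>u. x y - x u", OF finite_neighbours[OF sg] nonneg]
      by blast
    moreover have "z \<in> neighbours V E y"
      using simple_graph_doubleton_edge[OF sg step.hyps(2)] step.hyps(2)
      by (simp add: neighbours_def insert_commute)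
    ultimately show ?case using step.IH by (auto simp: neighbours_def)
  qed
  then show ?thesis using con v0(1) assms(4,5) unfolding graph_connected_def by metis
qed

lemma laplacian_solvable:
  assumes sg: "simple_graph V E" and con: "graph_connected V E"
    and balanced: "(\<Sum>v\<in>V. b v) = 0"
  shows "\<exists>x. \<forall>v\<in>V. laplacian V E x v = b v"
proof (cases "V = {}")
  case False
  then obtain r where r: "r \<in> V" by blast
  have fin: "finite V" using sg simple_graph_finite by blast
  have laplacian_root: "laplacian V E x r = - (\<Sum>v\<in>V-{r}. laplacian V E x v)" for x
    using sum_laplacian_eq_0[OF sg, of x] sum.remove[OF fin r, of "laplacian V E x"] by linarith
  text \<open>The Laplacian with the equation at \<open>r\<close> replaced by the grounding \<open>x r = 0\<close> is injective.\<close>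
  define A where "A v u = (if v = r then (if u = r then 1 else 0)
     else (if u = v then real (card (neighbours V E v)) else 0) - (if u \<in> neighbours V E v then 1 else 0))"
    for v u
  have "A r u * x u = (if u = r then x u else 0)" for u x by (simp add: A_def)
  then have A_root: "(\<Sum>u\<in>V. A r u * x u) = x r" for x using fin r by simp
  have A_other: "(\<Sum>u\<in>V. A v u * x u) = laplacian V E x v" if "v \<in> V" "v \<noteq> r" for v x
    using that by (simp add: A_def laplacian_eq_matrix_sum[OF sg])
  have "\<exists>x. \<forall>v\<in>V. (\<Sum>u\<in>V. A v u * x u) = (if v = r then 0 else b v)"
  proof (rule injective_imp_solvable_linear_system[OF fin])
    fix x assume x: "\<forall>v\<in>V. (\<Sum>u\<in>V. A v u * x u) = 0"
    then have "\<forall>v\<in>V-{r}. laplacian V E x v = 0" using A_other by (metis DiffE singletonI)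
    then have "\<forall>v\<in>V. laplacian V E x v = 0" using laplacian_root[of x] by auto
    moreover have "x r = 0" using x r A_root by metis
    ultimately show "\<forall>u\<in>V. x u = 0" using harmonic_imp_constant[OF sg con] r by metis
  qed
  then obtain x where x: "\<forall>v\<in>V. (\<Sum>u\<in>V. A v u * x u) = (if v = r then 0 else b v)" by blast
  then have others: "\<forall>v\<in>V-{r}. laplacian V E x v = b v" using A_other by (metis DiffE singletonI)
  then have "laplacian V E x r = - (\<Sum>v\<in>V-{r}. b v)" using laplacian_root[of x] by simp
  also have "\<dots> = b r" using balanced sum.remove[OF fin r, of b] by linarith
  finally have "\<forall>v\<in>V. laplacian V E x v = b v" using others by blast
  then show ?thesis by blast
qed simp

lemma resistance_eq_potential_diff:
  assumes sg: "simple_graph V E" and con: "graph_connected V E" and "i \<in> V" "j \<in> V"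
    and x: "\<forall>v\<in>V. laplacian V E x v = (if v = i then 1 else 0) - (if v = j then 1 else 0)"
  shows "resistance V E i j = x i - x j"
  unfolding resistance_def
proof (rule the_equality)
  show "\<exists>x'. (\<forall>v\<in>V. (\<Sum>u\<in>{u \<in> V. {u, v} \<in> E}. x' v - x' u) =
          (if v = i then 1 else 0) - (if v = j then 1 else 0)) \<and> x i - x j = x' i - x' j"
    by (rule exI[of _ x]) (use x in \<open>simp add: laplacian_def neighbours_def\<close>)
next
  fix r :: real assume "\<exists>x'. (\<forall>v\<in>V. (\<Sum>u\<in>{u \<in> V. {u, v} \<in> E}. x' v - x' u) =
          (if v = i then 1 else 0) - (if v = j then 1 else 0)) \<and> r = x' i - x' j"
  then obtain x' where x': "\<forall>v\<in>V. laplacian V E x' v = (if v = i then 1 else 0) - (if v = j then 1 else 0)"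
    and r: "r = x' i - x' j" by (auto simp: laplacian_def neighbours_def)
  have "\<forall>v\<in>V. laplacian V E (\<lambda>t. x' t - x t) v = 0" using x x' by (simp add: laplacian_diff)
  from harmonic_imp_constant[OF sg con this assms(3,4)] show "r = x i - x j" using r by simp
qed

lemma resistance_eq_potential_diff':
  assumes sg: "simple_graph V E" and con: "graph_connected V E" and "i \<in> V" "j \<in> V"
    and x: "\<forall>v\<in>V. laplacian V E x v = (if v = i then 1 else 0) - (if v = j then 1 else 0)"
  shows "resistance V E j i = x i - x j"
  using resistance_eq_potential_diff[OF sg con assms(4,3), of "\<lambda>t. - x t"] x
  by (simp add: laplacian_uminus)

lemma resistance_self:
  assumes "simple_graph V E" "graph_connected V E" "i \<in> V"
  shows "resistance V E i i = 0"
  using resistance_eq_potential_diff[OF assms assms(3), of "\<lambda>_. 0"] by (simp add: laplacian_const)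

lemma Rplus_eq_sum_all_pairs:
  assumes "simple_graph V E" "graph_connected V E"
  shows "Rplus V E = (\<Sum>i\<in>V. \<Sum>j\<in>V. (real (Defs.degree E i) + real (Defs.degree E j)) * resistance V E i j) / 2"
  unfolding Rplus_def
  using assms by (simp add: sum.remove[OF simple_graph_finite] resistance_self cong: sum.cong)

lemma Rstar_eq_sum_all_pairs:
  assumes "simple_graph V E" "graph_connected V E"
  shows "Rstar V E = (\<Sum>i\<in>V. \<Sum>j\<in>V. (real (Defs.degree E i) * real (Defs.degree E j)) * resistance V E i j) / 2"
  unfolding Rstar_def
  using assms by (simp add: sum.remove[OF simple_graph_finite] resistance_self cong: sum.cong)

lemma tri_E_doubleton_iff:
  "{Inl u, Inl v} \<in> tri_E V E \<longleftrightarrow> {u, v} \<in> E"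
  "{Inl u, Inr e} \<in> tri_E V E \<longleftrightarrow> e \<in> E \<and> u \<in> e"
  "{Inr e, Inl u} \<in> tri_E V E \<longleftrightarrow> e \<in> E \<and> u \<in> e"
  "{Inr e, Inr f} \<notin> tri_E V E"
proof -
  have "{Inl u, Inl v} = Inl ` {u, v}" by simp
  then have "{Inl u, Inl v} \<in> (\<lambda>e. Inl ` e) ` E \<longleftrightarrow> {u, v} \<in> E"
    by (metis (no_types) image_iff inj_Inl inj_image_eq_iff)
  then show "{Inl u, Inl v} \<in> tri_E V E \<longleftrightarrow> {u, v} \<in> E"
    unfolding tri_E_def by (auto simp: doubleton_eq_iff)
  show "{Inl u, Inr e} \<in> tri_E V E \<longleftrightarrow> e \<in> E \<and> u \<in> e"
    unfolding tri_E_def by (auto simp: doubleton_eq_iff)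
  then show "{Inr e, Inl u} \<in> tri_E V E \<longleftrightarrow> e \<in> E \<and> u \<in> e"
    by (simp add: insert_commute)
  show "{Inr e, Inr f} \<notin> tri_E V E"
    unfolding tri_E_def by (auto simp: doubleton_eq_iff)
qed

lemma simple_graph_tri:
  assumes "simple_graph V E"
  shows "simple_graph (tri_V V E) (tri_E V E)"
  unfolding simple_graph_def
proof
  show "finite (tri_V V E)"
    using assms by (simp add: tri_V_def simple_graph_finite simple_graph_finite_edges)
  show "\<forall>x\<in>tri_E V E. card x = 2 \<and> x \<subseteq> tri_V V E"
  proof
    fix x assume "x \<in> tri_E V E"
    then consider (old) e where "e \<in> E" "x = Inl ` e"
      | (new) u e where "e \<in> E" "u \<in> e" "x = {Inl u, Inr e}"
      unfolding tri_E_def by blast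
    then show "card x = 2 \<and> x \<subseteq> tri_V V E"
      by cases (use simple_graph_edge[OF assms] in \<open>auto simp: card_image tri_V_def\<close>)
  qed
qed

lemma graph_connected_tri:
  assumes sg: "simple_graph V E" and con: "graph_connected V E"
  shows "graph_connected (tri_V V E) (tri_E V E)"
proof -
  let ?R = "(\<lambda>x y. {x, y} \<in> tri_E V E)\<^sup>*\<^sup>*"
  have old: "?R (Inl u) (Inl v)" if "(\<lambda>x y. {x, y} \<in> E)\<^sup>*\<^sup>* u v" for u v
    using that
  proof (induction rule: rtranclp_induct)
    case (step y z)
    then show ?case by (simp add: tri_E_doubleton_iff rtranclp.rtrancl_into_rtrancl)
  qed simp
  have to_old: "\<exists>a\<in>V. ?R t (Inl a) \<and> ?R (Inl a) t" if "t \<in> tri_V V E" for t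
  proof (cases t)
    case (Inr e)
    then have e: "e \<in> E" using that by (auto simp: tri_V_def)
    then obtain a where "a \<in> e" "a \<in> V" using simple_graph_edgeE[OF sg] by blast
    then show ?thesis using e Inr by (metis r_into_rtranclp tri_E_doubleton_iff(2,3))
  qed (use that in \<open>auto simp: tri_V_def\<close>)
  show ?thesis unfolding graph_connected_def
  proof (intro ballI)
    fix s t assume "s \<in> tri_V V E" "t \<in> tri_V V E"
    then obtain a b where "a \<in> V" "?R s (Inl a)" "b \<in> V" "?R (Inl b) t" using to_old by blast
    moreover have "?R (Inl a) (Inl b)"
      using old con \<open>a \<in> V\<close> \<open>b \<in> V\<close> unfolding graph_connected_def by blast
    ultimately show "?R s t" by (meson rtranclp_trans)
  qed
qed

lemma neighbours_tri_Inl: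
  "neighbours (tri_V V E) (tri_E V E) (Inl v) = Inl ` neighbours V E v \<union> Inr ` {e\<in>E. v \<in> e}"
proof (rule Set.set_eqI)
  fix t show "t \<in> neighbours (tri_V V E) (tri_E V E) (Inl v)
    \<longleftrightarrow> t \<in> Inl ` neighbours V E v \<union> Inr ` {e\<in>E. v \<in> e}"
    by (cases t) (auto simp: neighbours_def tri_V_def tri_E_doubleton_iff)
qed

lemma neighbours_tri_Inr:
  assumes "simple_graph V E" and "e \<in> E"
  shows "neighbours (tri_V V E) (tri_E V E) (Inr e) = Inl ` e"
proof (rule Set.set_eqI)
  have "e \<subseteq> V" using simple_graph_edge[OF assms] by simp
  fix t show "t \<in> neighbours (tri_V V E) (tri_E V E) (Inr e) \<longleftrightarrow> t \<in> Inl ` e"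
    using \<open>e \<subseteq> V\<close> assms(2) by (cases t) (auto simp: neighbours_def tri_V_def tri_E_doubleton_iff)
qed

lemma degree_tri_Inl:
  assumes "simple_graph V E"
  shows "Defs.degree (tri_E V E) (Inl v) = 2 * Defs.degree E v"
proof -
  have fin: "finite (neighbours V E v)" "finite {e\<in>E. v \<in> e}"
    using finite_neighbours[OF assms] simple_graph_finite_edges[OF assms] by auto
  have "Defs.degree (tri_E V E) (Inl v) = card (Inl ` neighbours V E v \<union> Inr ` {e\<in>E. v \<in> e})"
    by (simp add: degree_eq_card_neighbours[OF simple_graph_tri[OF assms]] neighbours_tri_Inl)
  also have "\<dots> = card (neighbours V E v) + card {e\<in>E. v \<in> e}"
    by (subst card_Un_disjoint) (auto simp: fin card_image)
  finally show ?thesis by (simp add: degree_eq_card_neighbours[OF assms, symmetric] Defs.degree_def)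
qed

lemma degree_tri_Inr:
  assumes "simple_graph V E" and "e \<in> E"
  shows "Defs.degree (tri_E V E) (Inr e) = 2"
  using simple_graph_edge[OF assms]
  by (simp add: degree_eq_card_neighbours[OF simple_graph_tri[OF assms(1)]]
      neighbours_tri_Inr[OF assms] card_image)

lemma laplacian_tri_Inl:
  assumes "simple_graph V E"
  shows "laplacian (tri_V V E) (tri_E V E) y (Inl v) =
     (\<Sum>u\<in>neighbours V E v. y (Inl v) - y (Inl u)) + (\<Sum>e\<in>{e\<in>E. v \<in> e}. y (Inl v) - y (Inr e))"
proof -
  have fin: "finite (neighbours V E v)" "finite {e\<in>E. v \<in> e}"
    using finite_neighbours[OF assms] simple_graph_finite_edges[OF assms] by auto
  show ?thesis unfolding laplacian_def neighbours_tri_Inl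
    by (subst sum.union_disjoint) (auto simp: fin sum.reindex)
qed

lemma laplacian_tri_Inr:
  assumes "simple_graph V E" and "e \<in> E"
  shows "laplacian (tri_V V E) (tri_E V E) y (Inr e) = (\<Sum>p\<in>e. y (Inr e) - y (Inl p))"
  unfolding laplacian_def neighbours_tri_Inr[OF assms] by (simp add: sum.reindex)

definition tri_lift :: "('a \<Rightarrow> real) \<Rightarrow> ('a set \<Rightarrow> real) \<Rightarrow> 'a + 'a set \<Rightarrow> real" where
  "tri_lift x \<sigma> t = (case t of Inl v \<Rightarrow> 2/3 * x v | Inr e \<Rightarrow> (\<Sum>p\<in>e. x p) / 3 + \<sigma> e / 2)"

lemma laplacian_tri_lift:
  assumes sg: "simple_graph V E"
    and x: "\<forall>v\<in>V. laplacian V E x v = \<alpha> v + (\<Sum>e\<in>{e\<in>E. v \<in> e}. \<sigma> e) / 2"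
    and "t \<in> tri_V V E"
  shows "laplacian (tri_V V E) (tri_E V E) (tri_lift x \<sigma>) t = (case t of Inl v \<Rightarrow> \<alpha> v | Inr e \<Rightarrow> \<sigma> e)"
proof (cases t)
  case (Inl v)
  then have v: "v \<in> V" using assms(3) by (auto simp: tri_V_def)
  have "(\<Sum>e\<in>{e\<in>E. v \<in> e}. tri_lift x \<sigma> (Inl v) - tri_lift x \<sigma> (Inr e))
      = (\<Sum>e\<in>{e\<in>E. v \<in> e}. (\<Sum>p\<in>e. x v - x p) / 3 - \<sigma> e / 2)"
    by (rule sum.cong) (simp_all add: tri_lift_def sum_subtractf simple_graph_edge[OF sg])
  also have "\<dots> = (\<Sum>e\<in>{e\<in>E. v \<in> e}. \<Sum>p\<in>e. x v - x p) / 3 - (\<Sum>e\<in>{e\<in>E. v \<in> e}. \<sigma> e) / 2"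
    unfolding sum_divide_distrib by (rule sum_subtractf)
  also have "(\<Sum>e\<in>{e\<in>E. v \<in> e}. \<Sum>p\<in>e. x v - x p) = laplacian V E x v"
    using sum_incident_edges[OF sg, where v=v and f="\<lambda>p. x v - x p"] by (simp add: laplacian_def)
  finally have new: "(\<Sum>e\<in>{e\<in>E. v \<in> e}. tri_lift x \<sigma> (Inl v) - tri_lift x \<sigma> (Inr e))
      = laplacian V E x v / 3 - (\<Sum>e\<in>{e\<in>E. v \<in> e}. \<sigma> e) / 2" .
  have old: "(\<Sum>u\<in>neighbours V E v. tri_lift x \<sigma> (Inl v) - tri_lift x \<sigma> (Inl u)) = 2/3 * laplacian V E x v"
    by (simp add: tri_lift_def laplacian_def sum_distrib_left right_diff_distrib)
  show ?thesis
    using x v by (simp add: Inl laplacian_tri_Inl[OF sg] old new field_simps)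
next
  case (Inr e)
  then have "e \<in> E" using assms(3) by (auto simp: tri_V_def)
  then show ?thesis
    using Inr simple_graph_edge[OF sg \<open>e \<in> E\<close>]
    by (simp add: laplacian_tri_Inr[OF sg] tri_lift_def sum_subtractf sum_divide_distrib[symmetric]
        sum_distrib_left)
qed

lemma resistance_tri_lift:
  assumes sg: "simple_graph V E" and con: "graph_connected V E"
    and x: "\<forall>v\<in>V. laplacian V E x v = \<alpha> v + (\<Sum>e\<in>{e\<in>E. v \<in> e}. \<sigma> e) / 2"
    and ij: "i \<in> tri_V V E" "j \<in> tri_V V E"
    and currents: "\<forall>t\<in>tri_V V E. (case t of Inl v \<Rightarrow> \<alpha> v | Inr e \<Rightarrow> \<sigma> e)
                      = (if t = i then 1 else 0) - (if t = j then 1 else 0)"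
  shows "resistance (tri_V V E) (tri_E V E) i j = tri_lift x \<sigma> i - tri_lift x \<sigma> j"
    and "resistance (tri_V V E) (tri_E V E) j i = tri_lift x \<sigma> i - tri_lift x \<sigma> j"
proof -
  have "\<forall>t\<in>tri_V V E. laplacian (tri_V V E) (tri_E V E) (tri_lift x \<sigma>) t
          = (if t = i then 1 else 0) - (if t = j then 1 else 0)"
    using laplacian_tri_lift[OF sg x] currents by simp
  note lifted = this
  show "resistance (tri_V V E) (tri_E V E) i j = tri_lift x \<sigma> i - tri_lift x \<sigma> j"
    by (rule resistance_eq_potential_diff[OF simple_graph_tri[OF sg] graph_connected_tri[OF sg con] ij lifted])
  show "resistance (tri_V V E) (tri_E V E) j i = tri_lift x \<sigma> i - tri_lift x \<sigma> j"
    by (rule resistance_eq_potential_diff'[OF simple_graph_tri[OF sg] graph_connected_tri[OF sg con] ij lifted])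
qed

lemma sum_tri_V:
  assumes "simple_graph V E"
  shows "(\<Sum>t\<in>tri_V V E. h t) = (\<Sum>v\<in>V. h (Inl v)) + (\<Sum>e\<in>E. h (Inr e))"
  unfolding tri_V_def using assms simple_graph_finite simple_graph_finite_edges
  by (subst sum.union_disjoint) (auto simp: sum.reindex)

locale grounded_graph =
  fixes V :: "'a set" and E :: "'a set set" and r :: 'a
  assumes simple: "simple_graph V E" and connected: "graph_connected V E" and root: "r \<in> V"
begin

definition green :: "'a \<Rightarrow> 'a \<Rightarrow> real" where
  "green p = (SOME x. \<forall>v\<in>V. laplacian V E x v = (if v = p then 1 else 0) - (if v = r then 1 else 0))"

lemma laplacian_green:
  assumes "p \<in> V" and "v \<in> V"
  shows "laplacian V E (green p) v = (if v = p then 1 else 0) - (if v = r then 1 else 0)"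
proof -
  have "(\<Sum>v\<in>V. (if v = p then 1 else 0) - (if v = r then 1 else (0::real))) = 0"
    using simple_graph_finite[OF simple] assms(1) root by (simp add: sum_subtractf)
  from laplacian_solvable[OF simple connected this]
  have "\<forall>v\<in>V. laplacian V E (green p) v = (if v = p then 1 else 0) - (if v = r then 1 else 0)"
    unfolding green_def by (rule someI_ex)
  then show ?thesis using assms(2) by blast
qed

text \<open>A symmetric extension of the resistance to all of \<open>'a\<close>, so that sums over
  edges and vertices need no membership side conditions.\<close>
definition Omega :: "'a \<Rightarrow> 'a \<Rightarrow> real" where
  "Omega p q = green p p - green q p - green p q + green q q"

lemma Omega_commute: "Omega p q = Omega q p"
  by (simp add: Omega_def)

lemma Omega_self [simp]: "Omega p p = 0"
  by (simp add: Omega_def)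

lemma resistance_eq_Omega: "p \<in> V \<Longrightarrow> q \<in> V \<Longrightarrow> resistance V E p q = Omega p q"
  using resistance_eq_potential_diff[OF simple connected, of p q "\<lambda>t. green p t - green q t"]
  by (simp add: laplacian_diff laplacian_green Omega_def)

text \<open>For \<open>e = {a, b}\<close> this is \<open>2 * Omega a b\<close>.\<close>
definition Omega_edge :: "'a set \<Rightarrow> real" where
  "Omega_edge e = (\<Sum>p\<in>e. \<Sum>q\<in>e. Omega p q)"

lemma Foster_sum_Omega_edge: "(\<Sum>e\<in>E. Omega_edge e) = 2 * (real (card V) - 1)"
proof -
  have "(\<Sum>e\<in>E. Omega_edge e) = (\<Sum>p\<in>V. \<Sum>e\<in>{e\<in>E. p \<in> e}. \<Sum>q\<in>e. Omega p q)"
    unfolding Omega_edge_def by (rule sum_edges_endpoints_swap[OF simple])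
  also have "\<dots> = (\<Sum>p\<in>V. \<Sum>u\<in>neighbours V E p. Omega p u)"
    by (simp add: sum_incident_edges[OF simple])
  also have "\<dots> = (\<Sum>p\<in>V. \<Sum>u\<in>neighbours V E p. green p p - green p u)
                + (\<Sum>p\<in>V. \<Sum>u\<in>neighbours V E p. green u u - green u p)"
    by (simp add: Omega_def sum.distrib[symmetric] algebra_simps)
  also have "(\<Sum>p\<in>V. \<Sum>u\<in>neighbours V E p. green u u - green u p)
           = (\<Sum>p\<in>V. \<Sum>u\<in>neighbours V E p. green p p - green p u)"
    using sum_neighbours_swap[OF simple, of "\<lambda>p u. green p p - green p u"] by simp
  also have "(\<Sum>p\<in>V. \<Sum>u\<in>neighbours V E p. green p p - green p u) = (\<Sum>p\<in>V. laplacian V E (green p) p)"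
    by (simp add: laplacian_def)
  also have "\<dots> = (\<Sum>p\<in>V. 1 - (if p = r then 1 else 0))"
    by (rule sum.cong) (simp_all add: laplacian_green)
  also have "\<dots> = real (card V) - 1"
    using root simple_graph_finite[OF simple] by (simp add: sum_subtractf)
  finally show ?thesis by simp
qed

abbreviation VT :: "('a + 'a set) set" where "VT \<equiv> tri_V V E"
abbreviation ET :: "('a + 'a set) set set" where "ET \<equiv> tri_E V E"

lemma resistance_tri_Inl_Inl:
  assumes "u \<in> V" and "v \<in> V"
  shows "resistance VT ET (Inl u) (Inl v) = 2/3 * Omega u v"
proof -
  let ?x = "\<lambda>t. green u t - green v t"
  let ?\<alpha> = "\<lambda>w. (if w = u then 1 else 0) - (if w = v then (1::real) else 0)"
  have x: "\<forall>w\<in>V. laplacian V E ?x w = ?\<alpha> w + (\<Sum>e\<in>{e\<in>E. w \<in> e}. 0) / 2"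
    using assms by (simp add: laplacian_diff laplacian_green)
  have uv: "Inl u \<in> VT" "Inl v \<in> VT" using assms by (auto simp: tri_V_def)
  have "\<forall>t\<in>VT. (case t of Inl w \<Rightarrow> ?\<alpha> w | Inr e \<Rightarrow> 0)
      = (if t = Inl u then 1 else 0) - (if t = Inl v then 1 else 0)"
    by (auto split: sum.split)
  from resistance_tri_lift(1)[OF simple connected x uv this] show ?thesis
    by (simp add: tri_lift_def Omega_def field_simps)
qed

lemma resistance_tri_Inl_Inr:
  assumes "u \<in> V" and "e \<in> E"
  shows "resistance VT ET (Inl u) (Inr e) = (\<Sum>p\<in>e. Omega p u) / 3 - Omega_edge e / 12 + 1/2"
    and "resistance VT ET (Inr e) (Inl u) = (\<Sum>p\<in>e. Omega p u) / 3 - Omega_edge e / 12 + 1/2"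
proof -
  obtain a b where ab: "e = {a, b}" "a \<noteq> b" "a \<in> V" "b \<in> V"
    using simple_graph_edgeE[OF simple assms(2)] .
  let ?x = "\<lambda>t. green u t - (green a t + green b t) / 2"
  let ?\<alpha> = "\<lambda>w. if w = u then (1::real) else 0"
  let ?\<sigma> = "\<lambda>f. if f = e then (-1::real) else 0"
  have "\<forall>w\<in>V. laplacian V E ?x w = ?\<alpha> w + (\<Sum>f\<in>{f\<in>E. w \<in> f}. ?\<sigma> f) / 2"
  proof
    fix w assume "w \<in> V"
    have "(\<Sum>f\<in>{f\<in>E. w \<in> f}. ?\<sigma> f) = (if w = a \<or> w = b then -1 else 0)"
      using simple_graph_finite_edges[OF simple] assms(2) ab(1) by simp
    then show "laplacian V E ?x w = ?\<alpha> w + (\<Sum>f\<in>{f\<in>E. w \<in> f}. ?\<sigma> f) / 2"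
      using \<open>w \<in> V\<close> assms(1) ab by (simp add: laplacian_diff laplacian_add laplacian_divide laplacian_green)
  qed
  moreover have "Inl u \<in> VT" "Inr e \<in> VT" using assms by (auto simp: tri_V_def)
  moreover have "\<forall>t\<in>VT. (case t of Inl w \<Rightarrow> ?\<alpha> w | Inr f \<Rightarrow> ?\<sigma> f)
      = (if t = Inl u then 1 else 0) - (if t = Inr e then 1 else 0)"
    by (auto split: sum.split)
  moreover have "tri_lift ?x ?\<sigma> (Inl u) - tri_lift ?x ?\<sigma> (Inr e)
      = (\<Sum>p\<in>e. Omega p u) / 3 - Omega_edge e / 12 + 1/2"
    using ab by (simp add: tri_lift_def Omega_edge_def Omega_def field_simps)
  ultimately show "resistance VT ET (Inl u) (Inr e) = (\<Sum>p\<in>e. Omega p u) / 3 - Omega_edge e / 12 + 1/2"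
    and "resistance VT ET (Inr e) (Inl u) = (\<Sum>p\<in>e. Omega p u) / 3 - Omega_edge e / 12 + 1/2"
    using resistance_tri_lift[OF simple connected] by simp_all
qed

lemma resistance_tri_Inr_Inr:
  assumes "e \<in> E" and "f \<in> E"
  shows "resistance VT ET (Inr e) (Inr f) = (\<Sum>p\<in>e. \<Sum>q\<in>f. Omega p q) / 6
      - (Omega_edge e + Omega_edge f) / 12 + (if e = f then 0 else 1)"
proof (cases "e = f")
  case True
  then show ?thesis
    using assms resistance_self[OF simple_graph_tri[OF simple] graph_connected_tri[OF simple connected]]
    by (simp add: tri_V_def Omega_edge_def)
next
  case False
  obtain a b where ab: "e = {a, b}" "a \<noteq> b" "a \<in> V" "b \<in> V"
    using simple_graph_edgeE[OF simple assms(1)] .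
  obtain c d where cd: "f = {c, d}" "c \<noteq> d" "c \<in> V" "d \<in> V"
    using simple_graph_edgeE[OF simple assms(2)] .
  let ?x = "\<lambda>t. ((green a t + green b t) - (green c t + green d t)) / 2"
  let ?\<sigma> = "\<lambda>h. (if h = e then (1::real) else 0) - (if h = f then 1 else 0)"
  have "\<forall>w\<in>V. laplacian V E ?x w = 0 + (\<Sum>h\<in>{h\<in>E. w \<in> h}. ?\<sigma> h) / 2"
  proof
    fix w assume "w \<in> V"
    have "(\<Sum>h\<in>{h\<in>E. w \<in> h}. ?\<sigma> h) = (if w = a \<or> w = b then 1 else 0) - (if w = c \<or> w = d then 1 else 0)"
      using simple_graph_finite_edges[OF simple] assms ab(1) cd(1) by (simp add: sum_subtractf)
    then show "laplacian V E ?x w = 0 + (\<Sum>h\<in>{h\<in>E. w \<in> h}. ?\<sigma> h) / 2"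
      using \<open>w \<in> V\<close> ab cd by (simp add: laplacian_diff laplacian_add laplacian_divide laplacian_green)
  qed
  moreover have "Inr e \<in> VT" "Inr f \<in> VT" using assms by (auto simp: tri_V_def)
  moreover have "\<forall>t\<in>VT. (case t of Inl w \<Rightarrow> 0 | Inr h \<Rightarrow> ?\<sigma> h)
      = (if t = Inr e then 1 else 0) - (if t = Inr f then 1 else 0)"
    by (auto split: sum.split)
  moreover have "tri_lift ?x ?\<sigma> (Inr e) - tri_lift ?x ?\<sigma> (Inr f)
      = (\<Sum>p\<in>e. \<Sum>q\<in>f. Omega p q) / 6 - (Omega_edge e + Omega_edge f) / 12 + 1"
    using ab cd False by (simp add: tri_lift_def Omega_edge_def Omega_def field_simps)
  ultimately show ?thesis
    using resistance_tri_lift(1)[OF simple connected, where \<alpha>="\<lambda>_. 0"] False by simp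
qed

abbreviation deg :: "'a \<Rightarrow> real" where "deg v \<equiv> real (Defs.degree E v)"

lemma Rplus_eq_sum_Omega: "Rplus V E = (\<Sum>u\<in>V. \<Sum>v\<in>V. (deg u + deg v) * Omega u v) / 2"
  using Rplus_eq_sum_all_pairs[OF simple connected] by (simp add: resistance_eq_Omega cong: sum.cong)

lemma Rstar_eq_sum_Omega: "Rstar V E = (\<Sum>u\<in>V. \<Sum>v\<in>V. (deg u * deg v) * Omega u v) / 2"
  using Rstar_eq_sum_all_pairs[OF simple connected] by (simp add: resistance_eq_Omega cong: sum.cong)

lemma Rplus_eq_sum_degree_Omega: "Rplus V E = (\<Sum>u\<in>V. \<Sum>p\<in>V. deg p * Omega p u)"
proof -
  have "(\<Sum>u\<in>V. \<Sum>v\<in>V. (deg u + deg v) * Omega u v)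
      = (\<Sum>u\<in>V. \<Sum>v\<in>V. deg u * Omega u v) + (\<Sum>u\<in>V. \<Sum>v\<in>V. deg v * Omega u v)"
    by (simp add: sum.distrib[symmetric] algebra_simps)
  also have "(\<Sum>u\<in>V. \<Sum>v\<in>V. deg u * Omega u v) = (\<Sum>u\<in>V. \<Sum>p\<in>V. deg p * Omega p u)"
    by (rule sum.swap)
  also have "(\<Sum>u\<in>V. \<Sum>v\<in>V. deg v * Omega u v) = (\<Sum>u\<in>V. \<Sum>p\<in>V. deg p * Omega p u)"
    by (simp add: Omega_commute)
  finally show ?thesis by (simp add: Rplus_eq_sum_Omega)
qed

lemma Rstar_eq_sum_degree_Omega: "2 * Rstar V E = (\<Sum>u\<in>V. deg u * (\<Sum>p\<in>V. deg p * Omega p u))"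
  by (simp add: Rstar_eq_sum_Omega sum_distrib_left Omega_commute algebra_simps)

lemma Rplus_tri_eq_blocks:
  "2 * Rplus VT ET =
     (\<Sum>u\<in>V. \<Sum>v\<in>V. (2 * deg u + 2 * deg v) * (2/3 * Omega u v))
   + 2 * (\<Sum>u\<in>V. \<Sum>e\<in>E. (2 * deg u + 2) * ((\<Sum>p\<in>e. Omega p u) / 3 - Omega_edge e / 12 + 1/2))
   + 4 * (\<Sum>e\<in>E. \<Sum>f\<in>E. (\<Sum>p\<in>e. \<Sum>q\<in>f. Omega p q) / 6 - (Omega_edge e + Omega_edge f) / 12
                          + (if e = f then 0 else 1))"
proof -
  let ?d = "\<lambda>t. real (Defs.degree ET t)"
  let ?R = "resistance VT ET"
  have "2 * Rplus VT ET = (\<Sum>i\<in>VT. \<Sum>j\<in>VT. (?d i + ?d j) * ?R i j)"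
    using Rplus_eq_sum_all_pairs[OF simple_graph_tri[OF simple] graph_connected_tri[OF simple connected]]
    by simp
  also have "\<dots> = (\<Sum>u\<in>V. (\<Sum>v\<in>V. (?d (Inl u) + ?d (Inl v)) * ?R (Inl u) (Inl v))
                          + (\<Sum>e\<in>E. (?d (Inl u) + ?d (Inr e)) * ?R (Inl u) (Inr e)))
                + (\<Sum>e\<in>E. (\<Sum>v\<in>V. (?d (Inr e) + ?d (Inl v)) * ?R (Inr e) (Inl v))
                          + (\<Sum>f\<in>E. (?d (Inr e) + ?d (Inr f)) * ?R (Inr e) (Inr f)))"
    by (simp add: sum_tri_V[OF simple])
  also have "\<dots> = (\<Sum>u\<in>V. (\<Sum>v\<in>V. (2 * deg u + 2 * deg v) * (2/3 * Omega u v))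
          + (\<Sum>e\<in>E. (2 * deg u + 2) * ((\<Sum>p\<in>e. Omega p u) / 3 - Omega_edge e / 12 + 1/2)))
      + (\<Sum>e\<in>E. (\<Sum>v\<in>V. (2 + 2 * deg v) * ((\<Sum>p\<in>e. Omega p v) / 3 - Omega_edge e / 12 + 1/2))
          + (\<Sum>f\<in>E. 4 * ((\<Sum>p\<in>e. \<Sum>q\<in>f. Omega p q) / 6 - (Omega_edge e + Omega_edge f) / 12
                          + (if e = f then 0 else 1))))"
    by (intro arg_cong2[where f="(+)"] sum.cong refl)
       (simp_all add: degree_tri_Inl degree_tri_Inr simple resistance_tri_Inl_Inl
         resistance_tri_Inl_Inr resistance_tri_Inr_Inr)
  finally show ?thesis
    by (simp add: sum.distrib sum_distrib_left sum.swap[where A=E and B=V] algebra_simps)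
qed

lemma Rplus_tri_block_old_old:
  "(\<Sum>u\<in>V. \<Sum>v\<in>V. (2 * deg u + 2 * deg v) * (2/3 * Omega u v)) = 8/3 * Rplus V E"
  by (simp add: Rplus_eq_sum_Omega sum_distrib_left algebra_simps)

lemma Rplus_tri_block_old_new:
  "(\<Sum>u\<in>V. \<Sum>e\<in>E. (2 * deg u + 2) * ((\<Sum>p\<in>e. Omega p u) / 3 - Omega_edge e / 12 + 1/2))
   = 4/3 * Rstar V E + 2/3 * Rplus V E
     + (2 * real (card E) + real (card V)) * (real (card E) - (real (card V) - 1) / 3)"
proof -
  define A where "A u = (\<Sum>p\<in>V. deg p * Omega p u)" for u
  define c where "c = real (card E) / 2 - (real (card V) - 1) / 6"
  have edge_sum: "(\<Sum>e\<in>E. (\<Sum>p\<in>e. Omega p u) / 3 - Omega_edge e / 12 + 1/2) = A u / 3 + c" for u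
    using Foster_sum_Omega_edge sum_edges_endpoints[OF simple, of "\<lambda>p. Omega p u"]
    by (simp add: A_def c_def sum.distrib sum_subtractf sum_divide_distrib[symmetric])
  have "(\<Sum>u\<in>V. \<Sum>e\<in>E. (2 * deg u + 2) * ((\<Sum>p\<in>e. Omega p u) / 3 - Omega_edge e / 12 + 1/2))
      = (\<Sum>u\<in>V. (2 * deg u + 2) * (A u / 3 + c))"
    unfolding sum_distrib_left[symmetric] edge_sum ..
  also have "\<dots> = 2/3 * (\<Sum>u\<in>V. deg u * A u) + 2/3 * (\<Sum>u\<in>V. A u)
      + (2 * (\<Sum>u\<in>V. deg u) + 2 * real (card V)) * c"
    by (simp add: algebra_simps sum.distrib sum_distrib_left sum_distrib_right)
  finally show ?thesis
    by (simp add: A_def c_def Rstar_eq_sum_degree_Omega[symmetric] Rplus_eq_sum_degree_Omega[symmetric]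
        sum_degree[OF simple] field_simps)
qed

lemma Rplus_tri_block_new_new:
  "(\<Sum>e\<in>E. \<Sum>f\<in>E. (\<Sum>p\<in>e. \<Sum>q\<in>f. Omega p q) / 6 - (Omega_edge e + Omega_edge f) / 12
                  + (if e = f then 0 else 1))
   = Rstar V E / 3 - real (card E) * (real (card V) - 1) / 3 + real (card E)^2 - real (card E)"
proof -
  have "(\<Sum>e\<in>E. \<Sum>f\<in>E. \<Sum>p\<in>e. \<Sum>q\<in>f. Omega p q) = (\<Sum>e\<in>E. \<Sum>p\<in>e. \<Sum>f\<in>E. \<Sum>q\<in>f. Omega p q)"
    by (simp add: sum.swap[where A=E])
  also have "\<dots> = (\<Sum>p\<in>V. deg p * (\<Sum>q\<in>V. deg q * Omega p q))"
    by (simp add: sum_edges_endpoints[OF simple])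
  also have "\<dots> = 2 * Rstar V E"
    by (simp add: Rstar_eq_sum_degree_Omega Omega_commute)
  finally have pairs: "(\<Sum>e\<in>E. \<Sum>f\<in>E. \<Sum>p\<in>e. \<Sum>q\<in>f. Omega p q) = 2 * Rstar V E" .
  have "(\<Sum>f\<in>E. if e = f then 0 else 1) = real (card E) - 1" if "e \<in> E" for e
  proof -
    have "(\<Sum>f\<in>E. if e = f then 0 else 1) = (\<Sum>f\<in>E. 1 - (if e = f then 1 else (0::real)))"
      by (rule sum.cong) auto
    then show ?thesis using that simple_graph_finite_edges[OF simple] by (simp add: sum_subtractf)
  qed
  then have off_diagonal: "(\<Sum>e\<in>E. \<Sum>f\<in>E. if e = f then 0 else 1) = real (card E) * (real (card E) - 1)"
    by simp
  have edges: "(\<Sum>e\<in>E. \<Sum>f\<in>E. Omega_edge e + Omega_edge f) = 4 * real (card E) * (real (card V) - 1)"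
    by (simp add: sum.distrib Foster_sum_Omega_edge sum_distrib_left[symmetric])
  have "(\<Sum>e\<in>E. \<Sum>f\<in>E. (\<Sum>p\<in>e. \<Sum>q\<in>f. Omega p q) / 6 - (Omega_edge e + Omega_edge f) / 12
                  + (if e = f then 0 else 1))
      = (\<Sum>e\<in>E. \<Sum>f\<in>E. \<Sum>p\<in>e. \<Sum>q\<in>f. Omega p q) / 6
        - (\<Sum>e\<in>E. \<Sum>f\<in>E. Omega_edge e + Omega_edge f) / 12
        + (\<Sum>e\<in>E. \<Sum>f\<in>E. if e = f then 0 else 1)"
    by (simp add: sum.distrib sum_subtractf sum_divide_distrib[symmetric])
  also have "\<dots> = 2 * Rstar V E / 6 - 4 * real (card E) * (real (card V) - 1) / 12
                    + real (card E) * (real (card E) - 1)"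
    by (simp only: pairs edges off_diagonal)
  finally show ?thesis by (simp add: power2_eq_square field_simps)
qed

end

theorem theorem4p4:
  fixes V :: "'a set" and E :: "'a set set"
  assumes "simple_graph V E" and "graph_connected V E" and "card V \<ge> 2"
  shows "Rplus (tri_V V E) (tri_E V E) =
           2 * Rplus V E + 2 * Rstar V E
           + (12 * real (card E)^2 - real (card E) * real (card V) - real (card V)^2
              - 2 * real (card E) + real (card V)) / 3"
proof -
  obtain r where "r \<in> V" using assms(3) by fastforce
  then interpret grounded_graph V E r using assms(1,2) by unfold_locales
  show ?thesis
    using Rplus_tri_eq_blocks Rplus_tri_block_old_old Rplus_tri_block_old_new Rplus_tri_block_new_new
    by (simp add: field_simps power2_eq_square)
qed

end
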